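(* For every fixed $\mathcal R>0$, the diversity order $$d=-\lim_{\gamma_T\to\infty}\frac{\log P_{out}^{IR}(M)}{\log\gamma_T}$$ exists and equals $M$; equivalently $P_{out}^{IR}(M)=c(\gamma_T)\gamma_T^{-M}$ with $\lim_{\gamma_T\to\infty}\log c(\gamma_T)/\log\gamma_T=0$.
   Context: Fix $M\ge 1$, $\sigma_1,\dots,\sigma_M>0$ and real $\lambda_1,\dots,\lambda_M$ with $|\lambda_k|<1$ (so that the pairwise power correlation coefficients $\rho_{k,l}=\lambda_k^2\lambda_l^2$ are $<1$). Let ${}_0F_1(;1;z)=\sum_{n\ge0} z^n/(n!)^2$. The random vector $(|h_1|,\dots,|h_M|)$ has joint PDF on $[0,\infty)^M$ $$f(x_1,\dots,x_M)=\prod_{k=1}^M\frac{1}{\sigma_k^2(1-\lambda_k^2)}\int_0^\infty e^{-\left(1+\sum_{k=1}^M\frac{\lambda_k^2}{1-\lambda_k^2}\right)t}\prod_{k=1}^M x_k\,e^{-\frac{x_k^2}{2\sigma_k^2(1-\lambda_k^2)}}\,{}_0F_1\!\left(;1;\frac{x_k^2\lambda_k^2 t}{2\sigma_k^2(1-\lambda_k^2)^2}\right)dt .$$ For a transmit SNR $\gamma_T>0$ set $\gamma_l=\gamma_T|h_l|^2$ and define the outage probability $P_{out}^{IR}(M)=\Pr\big(\sum_{l=1}^M\log_2(1+\gamma_l)<\mathcal R\big)$ (a function of $\gamma_T$). *)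

theory Defs
  imports "HOL-Analysis.Analysis"
begin

definition hyp0F1_1 :: "real \<Rightarrow> real" where
  "hyp0F1_1 z = (\<Sum>n. z ^ n / (fact n)^2)"

text \<open>Joint PDF of (|h_1|,...,|h_M|); indices k range over {..<M}
  (k = 0..M-1 corresponds to the paper's 1..M).\<close>
definition jpdf :: "nat \<Rightarrow> (nat \<Rightarrow> real) \<Rightarrow> (nat \<Rightarrow> real) \<Rightarrow> (nat \<Rightarrow> real) \<Rightarrow> real" where
  "jpdf M \<sigma> lam x =
     (\<Prod>k<M. 1 / ((\<sigma> k)^2 * (1 - (lam k)^2))) *
     (\<integral>t\<in>{0..}.
        exp (- (1 + (\<Sum>k<M. (lam k)^2 / (1 - (lam k)^2))) * t) *
        (\<Prod>k<M. x k * exp (- ((x k)^2 / (2 * (\<sigma> k)^2 * (1 - (lam k)^2)))) *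
            hyp0F1_1 ((x k)^2 * (lam k)^2 * t / (2 * (\<sigma> k)^2 * (1 - (lam k)^2)^2)))
      \<partial>lborel)"

definition outage_set :: "nat \<Rightarrow> real \<Rightarrow> real \<Rightarrow> (nat \<Rightarrow> real) set" where
  "outage_set M R \<gamma>T = {x. (\<forall>k<M. 0 \<le> x k) \<and> (\<Sum>l<M. log 2 (1 + \<gamma>T * (x l)^2)) < R}"

definition P_out_IR :: "nat \<Rightarrow> (nat \<Rightarrow> real) \<Rightarrow> (nat \<Rightarrow> real) \<Rightarrow> real \<Rightarrow> real \<Rightarrow> real" where
  "P_out_IR M \<sigma> lam R \<gamma>T =
     (\<integral>x\<in>outage_set M R \<gamma>T. jpdf M \<sigma> lam x \<partial>(PiM {..<M} (\<lambda>_. lborel)))"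

end

theory Submission
  imports Defs
begin

text \<open>Near the origin the joint density behaves like \<open>\<Prod>k x\<^sub>k\<close> up to positive constants:
  the factors \<open>exp (- x\<^sub>k\<^sup>2 / \<dots>)\<close> lie between a positive constant and 1, and
  \<open>1 \<le> \<^sub>0F\<^sub>1(;1;z) \<le> exp z\<close>, so for small \<open>x\<close> the \<open>t\<close>-integrand is squeezed between two
  exponentially decaying functions of \<open>t\<close>. The outage event is squeezed between the cubes
  \<open>[0, \<surd>(\<alpha>/\<gamma>\<^sub>T)]\<^sup>M\<close> and \<open>[0, \<surd>(\<beta>/\<gamma>\<^sub>T)]\<^sup>M\<close> with \<open>\<alpha> = 2\<^bsup>R/(M+1)\<^esup> - 1\<close> and
  \<open>\<beta> = 2\<^bsup>R\<^esup> - 1\<close>, and over \<open>[0, s]\<^sup>M\<close> the product \<open>\<Prod>k x\<^sub>k\<close> integrates to \<open>(s\<^sup>2/2)\<^sup>M\<close>. Hence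
  \<open>P\<^sub>o\<^sub>u\<^sub>t\<close> lies between two constant multiples of \<open>\<gamma>\<^sub>T\<^sup>-\<^sup>M\<close>, which forces the diversity order \<open>M\<close>.\<close>

lemma summable_hyp0F1_1_series: "summable (\<lambda>n. z ^ n / (fact n)^2 :: real)"
proof (rule summable_comparison_test'[where g="\<lambda>n. \<bar>z\<bar>^n / fact n" and N=0])
  show "summable (\<lambda>n. \<bar>z\<bar>^n / fact n)"
    using summable_exp[of "\<bar>z\<bar>"] by (simp add: divide_inverse mult.commute)
next
  fix n :: nat
  have "\<bar>z\<bar> ^ n / (fact n)^2 \<le> \<bar>z\<bar> ^ n / fact n"
    by (intro divide_left_mono) (auto simp: power2_eq_square)
  then show "norm (z ^ n / (fact n)^2) \<le> \<bar>z\<bar> ^ n / fact n"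
    by (simp add: power_abs abs_mult)
qed

lemma hyp0F1_1_ge_1: "0 \<le> z \<Longrightarrow> 1 \<le> hyp0F1_1 z"
  unfolding hyp0F1_1_def
  using sum_le_suminf[OF summable_hyp0F1_1_series, of "{..<1}" z] by auto

lemma hyp0F1_1_le_exp: "0 \<le> z \<Longrightarrow> hyp0F1_1 z \<le> exp z"
  unfolding hyp0F1_1_def
proof (rule sums_le[OF _ summable_sums[OF summable_hyp0F1_1_series] exp_converges])
  fix n :: nat
  assume "0 \<le> z"
  have "z ^ n * 1 \<le> z ^ n * fact n"
    using \<open>0 \<le> z\<close> by (intro mult_left_mono) auto
  then show "z ^ n / (fact n)\<^sup>2 \<le> z ^ n /\<^sub>R fact n"
    by (simp add: power2_eq_square divide_simps)
qed

lemma borel_measurable_hyp0F1_1 [measurable]: "hyp0F1_1 \<in> borel_measurable borel"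
  unfolding hyp0F1_1_def[abs_def] by measurable

lemma borel_measurable_jpdf: "jpdf M \<sigma> lam \<in> borel_measurable (PiM {..<M} (\<lambda>_. lborel))"
  unfolding jpdf_def[abs_def] set_lebesgue_integral_def by measurable

lemma pred_outage_set: "Measurable.pred (PiM {..<M} (\<lambda>_. lborel)) (\<lambda>x. x \<in> outage_set M R \<gamma>)"
  unfolding outage_set_def by measurable

lemma
  assumes "0 < a"
  shows set_integrable_exp_neg: "set_integrable lborel {0..} (\<lambda>t::real. exp (- a * t))"
    and set_integral_exp_neg: "(LINT t:{0..}|lborel. exp (- a * t)) = 1 / a"
proof -
  have has_integral: "((\<lambda>t::real. exp (- a * t)) has_integral 1 / a) {0..}"
    using has_integral_exp_minus_to_infinity[OF assms, of 0] by simp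
  then have "(\<lambda>t::real. exp (- a * t)) absolutely_integrable_on {0..}"
    by (intro nonnegative_absolutely_integrable_1) (auto simp: integrable_on_def)
  then show integrable: "set_integrable lborel {0..} (\<lambda>t::real. exp (- a * t))"
    unfolding set_integrable_def by (subst (asm) integrable_completion) auto
  show "(LINT t:{0..}|lborel. exp (- a * t)) = 1 / a"
    using set_borel_integral_eq_integral(2)[OF integrable] has_integral by (simp add: integral_unique)
qed

lemma set_integral_exp_sandwich:
  fixes F :: "real \<Rightarrow> real"
  assumes a: "0 < a" and b: "0 < b" and F: "F \<in> borel_measurable lborel" and L: "0 \<le> L"
    and bounds: "\<And>t. 0 \<le> t \<Longrightarrow> L * exp (- a * t) \<le> F t \<and> F t \<le> U * exp (- b * t)"
  shows "L / a \<le> (LINT t:{0..}|lborel. F t) \<and> (LINT t:{0..}|lborel. F t) \<le> U / b"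
proof -
  have lower: "set_integrable lborel {0..} (\<lambda>t. L * exp (- a * t))"
    using set_integrable_exp_neg[OF a] by (simp add: set_integrable_mult_right)
  have upper: "set_integrable lborel {0..} (\<lambda>t. U * exp (- b * t))"
    using set_integrable_exp_neg[OF b] by (simp add: set_integrable_mult_right)
  have "norm (F t) \<le> norm (U * exp (- b * t))" if "0 \<le> t" for t
  proof -
    have "0 \<le> L * exp (- a * t)"
      using L by simp
    then show ?thesis
      using bounds[OF that] by simp
  qed
  then have integrable: "set_integrable lborel {0..} F"
    using F by (intro set_integrable_bound[OF upper]) (auto simp: set_borel_measurable_def intro!: AE_I2)
  have "(LINT t:{0..}|lborel. L * exp (- a * t)) \<le> (LINT t:{0..}|lborel. F t)"
    using bounds by (intro set_integral_mono[OF lower integrable]) auto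
  moreover have "(LINT t:{0..}|lborel. F t) \<le> (LINT t:{0..}|lborel. U * exp (- b * t))"
    using bounds by (intro set_integral_mono[OF integrable upper]) auto
  ultimately show ?thesis
    using set_integral_exp_neg[OF a] set_integral_exp_neg[OF b]
    by (simp add: set_integral_mult_right)
qed

definition jpdf_factor :: "real \<Rightarrow> real \<Rightarrow> real \<Rightarrow> real \<Rightarrow> real" where
  "jpdf_factor s l x t =
     x * exp (- (x^2 / (2 * s^2 * (1 - l^2)))) * hyp0F1_1 (x^2 * l^2 * t / (2 * s^2 * (1 - l^2)^2))"

lemma jpdf_eq_integral:
  "jpdf M \<sigma> lam x =
     (\<Prod>k<M. 1 / ((\<sigma> k)^2 * (1 - (lam k)^2))) *
     (LINT t:{0..}|lborel. exp (- (1 + (\<Sum>k<M. (lam k)^2 / (1 - (lam k)^2))) * t) *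
        (\<Prod>k<M. jpdf_factor (\<sigma> k) (lam k) (x k) t))"
  unfolding jpdf_def jpdf_factor_def ..

lemma jpdf_factor_ge:
  assumes "s \<noteq> 0" "\<bar>l\<bar> < 1" "0 \<le> x" "x \<le> 1" "0 \<le> t"
  shows "x * exp (- (1 / (2 * s^2 * (1 - l^2)))) \<le> jpdf_factor s l x t"
proof -
  have denom: "0 < 2 * s^2 * (1 - l^2)"
    using assms(1,2) by (simp add: abs_square_less_1)
  have "x^2 \<le> 1"
    using assms(3,4) by (simp add: power_le_one)
  then have "exp (- (1 / (2 * s^2 * (1 - l^2)))) \<le> exp (- (x^2 / (2 * s^2 * (1 - l^2))))"
    using denom by (simp add: divide_right_mono)
  moreover have "1 \<le> hyp0F1_1 (x^2 * l^2 * t / (2 * s^2 * (1 - l^2)^2))"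
    using assms(5) by (intro hyp0F1_1_ge_1) simp
  ultimately have "exp (- (1 / (2 * s^2 * (1 - l^2)))) * 1
      \<le> exp (- (x^2 / (2 * s^2 * (1 - l^2)))) * hyp0F1_1 (x^2 * l^2 * t / (2 * s^2 * (1 - l^2)^2))"
    by (intro mult_mono) auto
  then show ?thesis
    unfolding jpdf_factor_def using assms(3) by (simp add: mult.assoc mult_left_mono)
qed

lemma jpdf_factor_le:
  assumes "\<bar>l\<bar> < 1" "0 \<le> x" "0 \<le> t"
  shows "jpdf_factor s l x t \<le> x * exp (x^2 * l^2 * t / (2 * s^2 * (1 - l^2)^2))"
proof -
  have "0 \<le> x^2 / (2 * s^2 * (1 - l^2))"
    using assms(1) by (simp add: abs_square_less_1 less_imp_le)
  then have "exp (- (x^2 / (2 * s^2 * (1 - l^2)))) \<le> 1"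
    by simp
  moreover have "hyp0F1_1 (x^2 * l^2 * t / (2 * s^2 * (1 - l^2)^2))
      \<le> exp (x^2 * l^2 * t / (2 * s^2 * (1 - l^2)^2))"
    using assms(3) by (intro hyp0F1_1_le_exp) simp
  ultimately have "exp (- (x^2 / (2 * s^2 * (1 - l^2)))) * hyp0F1_1 (x^2 * l^2 * t / (2 * s^2 * (1 - l^2)^2))
      \<le> 1 * exp (x^2 * l^2 * t / (2 * s^2 * (1 - l^2)^2))"
    using assms(3) by (intro mult_mono hyp0F1_1_ge_1[THEN order_trans[OF zero_le_one]]) auto
  then show ?thesis
    unfolding jpdf_factor_def using assms(2) by (simp add: mult.assoc mult_left_mono)
qed

lemma prod_jpdf_factor_ge:
  fixes M :: nat
  assumes "\<And>k. k < M \<Longrightarrow> \<sigma> k \<noteq> 0" "\<And>k. k < M \<Longrightarrow> \<bar>lam k\<bar> < 1"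
    and "\<And>k. k < M \<Longrightarrow> 0 \<le> x k \<and> x k \<le> 1" and "0 \<le> t"
  shows "(\<Prod>k<M. exp (- (1 / (2 * (\<sigma> k)^2 * (1 - (lam k)^2))))) * (\<Prod>k<M. x k)
    \<le> (\<Prod>k<M. jpdf_factor (\<sigma> k) (lam k) (x k) t)"
proof -
  have "(\<Prod>k<M. x k * exp (- (1 / (2 * (\<sigma> k)^2 * (1 - (lam k)^2)))))
      \<le> (\<Prod>k<M. jpdf_factor (\<sigma> k) (lam k) (x k) t)"
    using assms by (intro prod_mono) (auto intro: jpdf_factor_ge)
  then show ?thesis
    by (simp add: prod.distrib mult.commute)
qed

lemma prod_jpdf_factor_le:
  fixes M :: nat
  assumes "\<And>k. k < M \<Longrightarrow> \<bar>lam k\<bar> < 1" and "\<And>k. k < M \<Longrightarrow> 0 \<le> x k" and "0 \<le> t"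
  shows "(\<Prod>k<M. jpdf_factor (\<sigma> k) (lam k) (x k) t)
    \<le> exp ((\<Sum>k<M. (x k)^2 * (lam k)^2 / (2 * (\<sigma> k)^2 * (1 - (lam k)^2)^2)) * t) * (\<Prod>k<M. x k)"
proof -
  have "0 \<le> jpdf_factor (\<sigma> k) (lam k) (x k) t" if "k < M" for k
    using assms that
    by (auto simp: jpdf_factor_def intro!: mult_nonneg_nonneg order_trans[OF zero_le_one hyp0F1_1_ge_1])
  then have "(\<Prod>k<M. jpdf_factor (\<sigma> k) (lam k) (x k) t)
      \<le> (\<Prod>k<M. x k * exp ((x k)^2 * (lam k)^2 * t / (2 * (\<sigma> k)^2 * (1 - (lam k)^2)^2)))"
    using assms by (intro prod_mono) (auto intro: jpdf_factor_le)
  also have "\<dots> = exp (\<Sum>k<M. (x k)^2 * (lam k)^2 * t / (2 * (\<sigma> k)^2 * (1 - (lam k)^2)^2)) * (\<Prod>k<M. x k)"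
    by (simp add: prod.distrib exp_sum mult.commute)
  also have "(\<Sum>k<M. (x k)^2 * (lam k)^2 * t / (2 * (\<sigma> k)^2 * (1 - (lam k)^2)^2))
      = (\<Sum>k<M. (x k)^2 * (lam k)^2 / (2 * (\<sigma> k)^2 * (1 - (lam k)^2)^2)) * t"
    by (simp add: sum_distrib_right)
  finally show ?thesis .
qed

definition corner_cube :: "nat \<Rightarrow> real \<Rightarrow> (nat \<Rightarrow> real) set" where
  "corner_cube M s = {x. \<forall>k<M. 0 \<le> x k \<and> x k \<le> s}"

lemma jpdf_integrand_bounds:
  fixes M :: nat
  assumes \<sigma>: "\<And>k. k < M \<Longrightarrow> \<sigma> k \<noteq> 0" and lam: "\<And>k. k < M \<Longrightarrow> \<bar>lam k\<bar> < 1"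
    and x: "x \<in> corner_cube M 1"
    and small: "(\<Sum>k<M. (x k)^2 * (lam k)^2 / (2 * (\<sigma> k)^2 * (1 - (lam k)^2)^2)) \<le> 1 / 2"
    and A: "1 \<le> A" and t: "0 \<le> t"
  shows "(\<Prod>k<M. exp (- (1 / (2 * (\<sigma> k)^2 * (1 - (lam k)^2))))) * (\<Prod>k<M. x k) * exp (- A * t)
      \<le> exp (- A * t) * (\<Prod>k<M. jpdf_factor (\<sigma> k) (lam k) (x k) t)"
    and "exp (- A * t) * (\<Prod>k<M. jpdf_factor (\<sigma> k) (lam k) (x k) t)
      \<le> (\<Prod>k<M. x k) * exp (- (1 / 2) * t)"
proof -
  have x01: "0 \<le> x k \<and> x k \<le> 1" if "k < M" for k
    using x that by (simp add: corner_cube_def)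
  show "(\<Prod>k<M. exp (- (1 / (2 * (\<sigma> k)^2 * (1 - (lam k)^2))))) * (\<Prod>k<M. x k) * exp (- A * t)
      \<le> exp (- A * t) * (\<Prod>k<M. jpdf_factor (\<sigma> k) (lam k) (x k) t)"
    using prod_jpdf_factor_ge[OF \<sigma> lam x01 t] by (simp add: mult.commute)
  have "(\<Prod>k<M. jpdf_factor (\<sigma> k) (lam k) (x k) t)
      \<le> exp ((\<Sum>k<M. (x k)^2 * (lam k)^2 / (2 * (\<sigma> k)^2 * (1 - (lam k)^2)^2)) * t) * (\<Prod>k<M. x k)"
    using lam x01 t by (intro prod_jpdf_factor_le) auto
  also have "\<dots> \<le> exp (1 / 2 * t) * (\<Prod>k<M. x k)"
    using mult_right_mono[OF small t] x01 by (intro mult_right_mono prod_nonneg) auto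
  finally have "exp (- A * t) * (\<Prod>k<M. jpdf_factor (\<sigma> k) (lam k) (x k) t)
      \<le> exp (- A * t) * (exp (1 / 2 * t) * (\<Prod>k<M. x k))"
    by (rule mult_left_mono) simp
  also have "\<dots> = exp (- A * t + 1 / 2 * t) * (\<Prod>k<M. x k)"
    by (simp only: exp_add mult.assoc)
  also have "\<dots> \<le> exp (- (1 / 2) * t) * (\<Prod>k<M. x k)"
    using A t x01 mult_right_mono[OF A t] by (intro mult_right_mono prod_nonneg) auto
  finally show "exp (- A * t) * (\<Prod>k<M. jpdf_factor (\<sigma> k) (lam k) (x k) t)
      \<le> (\<Prod>k<M. x k) * exp (- (1 / 2) * t)"
    by (simp add: mult.commute)
qed

lemma jpdf_between_prod_multiples:
  fixes M :: nat and \<sigma> lam x :: "nat \<Rightarrow> real"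
  defines "A \<equiv> 1 + (\<Sum>k<M. (lam k)^2 / (1 - (lam k)^2))"
    and "P \<equiv> \<Prod>k<M. 1 / ((\<sigma> k)^2 * (1 - (lam k)^2))"
    and "m \<equiv> \<Prod>k<M. exp (- (1 / (2 * (\<sigma> k)^2 * (1 - (lam k)^2))))"
  assumes \<sigma>: "\<And>k. k < M \<Longrightarrow> \<sigma> k \<noteq> 0" and lam: "\<And>k. k < M \<Longrightarrow> \<bar>lam k\<bar> < 1"
    and x: "x \<in> corner_cube M 1"
    and small: "(\<Sum>k<M. (x k)^2 * (lam k)^2 / (2 * (\<sigma> k)^2 * (1 - (lam k)^2)^2)) \<le> 1 / 2"
  shows "P * (m / A) * (\<Prod>k<M. x k) \<le> jpdf M \<sigma> lam x \<and> jpdf M \<sigma> lam x \<le> P * 2 * (\<Prod>k<M. x k)"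
proof -
  have lam2: "0 < 1 - (lam k)^2" if "k < M" for k
    using lam[OF that] by (simp add: abs_square_less_1)
  have A: "1 \<le> A"
    unfolding A_def using lam2 by (auto intro!: sum_nonneg divide_nonneg_pos)
  have P: "0 \<le> P"
    unfolding P_def using lam2 by (intro prod_nonneg divide_nonneg_nonneg mult_nonneg_nonneg) (auto simp: less_imp_le)
  have "0 \<le> m * (\<Prod>k<M. x k)"
    using x by (auto simp: m_def corner_cube_def intro!: mult_nonneg_nonneg prod_nonneg)
  then have "m * (\<Prod>k<M. x k) / A
        \<le> (LINT t:{0..}|lborel. exp (- A * t) * (\<Prod>k<M. jpdf_factor (\<sigma> k) (lam k) (x k) t))
      \<and> (LINT t:{0..}|lborel. exp (- A * t) * (\<Prod>k<M. jpdf_factor (\<sigma> k) (lam k) (x k) t))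
        \<le> (\<Prod>k<M. x k) / (1 / 2)"
    using A jpdf_integrand_bounds[OF \<sigma> lam x small A]
    by (intro set_integral_exp_sandwich) (auto simp: m_def jpdf_factor_def)
  then have "P * (m * (\<Prod>k<M. x k) / A)
        \<le> P * (LINT t:{0..}|lborel. exp (- A * t) * (\<Prod>k<M. jpdf_factor (\<sigma> k) (lam k) (x k) t))
      \<and> P * (LINT t:{0..}|lborel. exp (- A * t) * (\<Prod>k<M. jpdf_factor (\<sigma> k) (lam k) (x k) t))
        \<le> P * ((\<Prod>k<M. x k) / (1 / 2))"
    using mult_left_mono P by blast
  then show ?thesis
    unfolding jpdf_eq_integral A_def[symmetric] P_def[symmetric] by (simp add: mult.assoc)
qed

lemma jpdf_bounded_by_prod_near_origin:
  fixes M :: nat and \<sigma> lam :: "nat \<Rightarrow> real"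
  assumes \<sigma>: "\<And>k. k < M \<Longrightarrow> \<sigma> k \<noteq> 0" and lam: "\<And>k. k < M \<Longrightarrow> \<bar>lam k\<bar> < 1"
  obtains \<epsilon> c C where "0 < \<epsilon>" "0 < c" "0 < C"
    "\<And>x. x \<in> corner_cube M \<epsilon> \<Longrightarrow>
       c * (\<Prod>k<M. x k) \<le> jpdf M \<sigma> lam x \<and> jpdf M \<sigma> lam x \<le> C * (\<Prod>k<M. x k)"
proof -
  have lam2: "0 < 1 - (lam k)^2" if "k < M" for k
    using lam[OF that] by (simp add: abs_square_less_1)
  define K where "K = (\<Sum>k<M. (lam k)^2 / (2 * (\<sigma> k)^2 * (1 - (lam k)^2)^2))"
  \<comment> \<open>Chosen so that \<open>\<epsilon> \<le> 1\<close> and \<open>\<epsilon>\<^sup>2 K \<le> 1/2\<close>, which keeps the \<open>t\<close>-integrand below \<open>exp (- t / 2) \<Prod>k x\<^sub>k\<close>.\<close>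
  define \<epsilon> where "\<epsilon> = 1 / sqrt (2 * K + 2)"
  have K: "0 \<le> K"
    unfolding K_def by (auto intro!: sum_nonneg)
  have "\<epsilon>^2 = 1 / (2 * K + 2)"
    unfolding \<epsilon>_def using K by (simp add: power_divide)
  then have \<epsilon>: "0 < \<epsilon>" "\<epsilon> \<le> 1" "\<epsilon>^2 * K \<le> 1 / 2"
    using K by (auto simp: \<epsilon>_def field_simps)
  define A where "A = 1 + (\<Sum>k<M. (lam k)^2 / (1 - (lam k)^2))"
  define P where "P = (\<Prod>k<M. 1 / ((\<sigma> k)^2 * (1 - (lam k)^2)))"
  define m where "m = (\<Prod>k<M. exp (- (1 / (2 * (\<sigma> k)^2 * (1 - (lam k)^2)))))"
  have "P * (m / A) * (\<Prod>k<M. x k) \<le> jpdf M \<sigma> lam x \<and> jpdf M \<sigma> lam x \<le> P * 2 * (\<Prod>k<M. x k)"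
    if x: "x \<in> corner_cube M \<epsilon>" for x
  proof -
    have "(\<Sum>k<M. (x k)^2 * (lam k)^2 / (2 * (\<sigma> k)^2 * (1 - (lam k)^2)^2))
        \<le> (\<Sum>k<M. \<epsilon>^2 * (lam k)^2 / (2 * (\<sigma> k)^2 * (1 - (lam k)^2)^2))"
      using x by (intro sum_mono divide_right_mono mult_right_mono power_mono) (auto simp: corner_cube_def)
    also have "\<dots> = \<epsilon>^2 * K"
      unfolding K_def by (simp add: sum_distrib_left)
    finally have small: "(\<Sum>k<M. (x k)^2 * (lam k)^2 / (2 * (\<sigma> k)^2 * (1 - (lam k)^2)^2)) \<le> 1 / 2"
      using \<epsilon>(3) by linarith
    have "x \<in> corner_cube M 1"
      using x \<epsilon>(2) by (auto simp: corner_cube_def)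
    from jpdf_between_prod_multiples[OF \<sigma> lam this small] show ?thesis
      unfolding A_def P_def m_def .
  qed
  moreover have "0 < P" "0 < m" "0 < A"
    using \<sigma> lam2 by (auto simp: P_def m_def A_def intro!: prod_pos add_pos_nonneg sum_nonneg divide_nonneg_pos)
  ultimately show thesis
    using that[of \<epsilon> "P * (m / A)" "P * 2"] \<epsilon>(1) by simp
qed

lemma indicator_corner_cube_mult_prod:
  "indicator (corner_cube M s) x * (\<Prod>k<M. x k) = (\<Prod>k<M. x k * indicator {0..s} (x k) :: real)"
  by (auto simp: corner_cube_def indicator_def prod.distrib[symmetric] intro: prod_zero)

lemma
  assumes "0 \<le> s"
  shows integrable_corner_cube_prod:
      "integrable (PiM {..<M} (\<lambda>_. lborel)) (\<lambda>x. indicator (corner_cube M s) x * (\<Prod>k<M. x k))"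
    and integral_corner_cube_prod:
      "(\<integral>x. indicator (corner_cube M s) x * (\<Prod>k<M. x k) \<partial>PiM {..<M} (\<lambda>_. lborel)) = (s^2 / 2)^M"
proof -
  interpret product_sigma_finite "\<lambda>_::nat. lborel :: real measure"
    by standard
  have integrable: "integrable lborel (\<lambda>t::real. t * indicator {0..s} t)"
    by (rule borel_integrable_atLeastAtMost) auto
  have integral: "(\<integral>t. t * indicator {0..s} t \<partial>lborel) = s^2 / 2"
    using integral_power[of 0 s 1] assms by (simp add: power2_eq_square)
  show "integrable (PiM {..<M} (\<lambda>_. lborel)) (\<lambda>x. indicator (corner_cube M s) x * (\<Prod>k<M. x k))"
    unfolding indicator_corner_cube_mult_prod
    using product_integrable_prod[of "{..<M}" "\<lambda>_ t. t * indicator {0..s} t"] integrable by simp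
  show "(\<integral>x. indicator (corner_cube M s) x * (\<Prod>k<M. x k) \<partial>PiM {..<M} (\<lambda>_. lborel)) = (s^2 / 2)^M"
    unfolding indicator_corner_cube_mult_prod
    using product_integral_prod[of "{..<M}" "\<lambda>_ t. t * indicator {0..s} t"] integrable integral by simp
qed

lemma set_integral_between_corner_cubes:
  fixes M :: nat and f :: "(nat \<Rightarrow> real) \<Rightarrow> real"
  defines "N \<equiv> PiM {..<M} (\<lambda>_. lborel)"
  assumes "0 \<le> a" "0 \<le> b" and cubes: "corner_cube M a \<subseteq> S" "S \<subseteq> corner_cube M b"
    and f: "f \<in> borel_measurable N" and S: "Measurable.pred N (\<lambda>x. x \<in> S)"
    and "0 \<le> c" "0 \<le> C"
    and bounds: "\<And>x. x \<in> S \<Longrightarrow> c * (\<Prod>k<M. x k) \<le> f x \<and> f x \<le> C * (\<Prod>k<M. x k)"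
  shows "c * (a^2 / 2)^M \<le> (\<integral>x\<in>S. f x \<partial>N) \<and> (\<integral>x\<in>S. f x \<partial>N) \<le> C * (b^2 / 2)^M"
proof -
  define lower where "lower x = c * (indicator (corner_cube M a) x * (\<Prod>k<M. x k))" for x
  define upper where "upper x = C * (indicator (corner_cube M b) x * (\<Prod>k<M. x k))" for x
  have prod_nonneg_b: "0 \<le> (\<Prod>k<M. x k)" if "x \<in> corner_cube M b" for x
    using that by (auto simp: corner_cube_def intro!: prod_nonneg)
  have pointwise: "lower x \<le> indicator S x * f x \<and> indicator S x * f x \<le> upper x" for x
    using cubes bounds[of x] prod_nonneg_b[of x] \<open>0 \<le> c\<close> \<open>0 \<le> C\<close>
    by (auto simp: lower_def upper_def indicator_def intro: order_trans[OF mult_nonneg_nonneg])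
  have integrable_lower: "integrable N lower" and integrable_upper: "integrable N upper"
    unfolding lower_def upper_def N_def using integrable_corner_cube_prod assms(2,3) by auto
  have "(\<lambda>x. indicator S x * f x) \<in> borel_measurable N"
    using f S by (simp add: pred_def borel_measurable_indicator)
  moreover have "norm (indicator S x * f x) \<le> norm (upper x)" for x
  proof -
    have "0 \<le> lower x"
      using \<open>0 \<le> c\<close> by (auto simp: lower_def corner_cube_def indicator_def intro!: mult_nonneg_nonneg prod_nonneg)
    then show ?thesis
      using pointwise[of x] by simp
  qed
  ultimately have integrable: "integrable N (\<lambda>x. indicator S x * f x)"
    by (intro Bochner_Integration.integrable_bound[OF integrable_upper]) auto
  have "integral\<^sup>L N lower \<le> (\<integral>x\<in>S. f x \<partial>N) \<and> (\<integral>x\<in>S. f x \<partial>N) \<le> integral\<^sup>L N upper"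
    unfolding set_lebesgue_integral_def using pointwise
    by (auto intro: integral_mono[OF integrable_lower integrable] integral_mono[OF integrable integrable_upper])
  then show ?thesis
    unfolding lower_def upper_def N_def using integral_corner_cube_prod assms(2,3) by simp
qed

lemma corner_cube_subset_outage_set:
  fixes M :: nat
  assumes "0 < \<gamma>" "0 < R"
  shows "corner_cube M (sqrt ((2 powr (R / (M + 1)) - 1) / \<gamma>)) \<subseteq> outage_set M R \<gamma>"
proof
  fix x
  assume x: "x \<in> corner_cube M (sqrt ((2 powr (R / (M + 1)) - 1) / \<gamma>))"
  have summand: "log 2 (1 + \<gamma> * (x l)^2) \<le> R / (M + 1)" if "l < M" for l
  proof -
    have "0 < (2 powr (R / (M + 1)) - 1) / \<gamma>"
      using assms by simp
    moreover have "0 \<le> x l" "x l \<le> sqrt ((2 powr (R / (M + 1)) - 1) / \<gamma>)"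
      using x that by (auto simp: corner_cube_def)
    ultimately have "(x l)^2 \<le> (2 powr (R / (M + 1)) - 1) / \<gamma>"
      by (metis power_mono real_sqrt_pow2 less_imp_le)
    then have "1 + \<gamma> * (x l)^2 \<le> 2 powr (R / (M + 1))"
      using assms(1) by (simp add: field_simps)
    then have "log 2 (1 + \<gamma> * (x l)^2) \<le> log 2 (2 powr (R / (M + 1)))"
      using assms(1) by (intro log_mono) (auto intro: add_pos_nonneg)
    then show ?thesis
      by simp
  qed
  have "(\<Sum>l<M. log 2 (1 + \<gamma> * (x l)^2)) \<le> M * (R / (M + 1))"
    using sum_bounded_above[of "{..<M}" "\<lambda>l. log 2 (1 + \<gamma> * (x l)^2)" "R / (M + 1)"] summand by simp
  also have "\<dots> < R"
    using assms(2) by (simp add: field_simps)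
  finally show "x \<in> outage_set M R \<gamma>"
    using x by (auto simp: outage_set_def corner_cube_def)
qed

lemma outage_set_subset_corner_cube:
  fixes M :: nat
  assumes "0 < \<gamma>"
  shows "outage_set M R \<gamma> \<subseteq> corner_cube M (sqrt ((2 powr R - 1) / \<gamma>))"
proof
  fix x
  assume x: "x \<in> outage_set M R \<gamma>"
  have "x k \<le> sqrt ((2 powr R - 1) / \<gamma>)" if k: "k < M" for k
  proof -
    have "0 \<le> log 2 (1 + \<gamma> * (x l)^2)" for l
      using assms by (subst zero_le_log_cancel_iff) (auto intro: add_pos_nonneg)
    then have "log 2 (1 + \<gamma> * (x k)^2) \<le> (\<Sum>l<M. log 2 (1 + \<gamma> * (x l)^2))"
      using k by (intro member_le_sum) auto
    then have "log 2 (1 + \<gamma> * (x k)^2) < R"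
      using x by (simp add: outage_set_def)
    then have "1 + \<gamma> * (x k)^2 < 2 powr R"
      using assms by (subst (asm) log_less_iff) (auto intro: add_pos_nonneg)
    then have "(x k)^2 \<le> (2 powr R - 1) / \<gamma>"
      using assms by (simp add: field_simps)
    then show ?thesis
      by (rule real_le_rsqrt)
  qed
  then show "x \<in> corner_cube M (sqrt ((2 powr R - 1) / \<gamma>))"
    using x by (simp add: outage_set_def corner_cube_def)
qed

lemma neg_ln_div_ln_tendsto_of_power_bounds:
  fixes P :: "real \<Rightarrow> real"
  assumes "0 < L" and bounds: "\<forall>\<^sub>F g in at_top. L / g powr d \<le> P g \<and> P g \<le> U / g powr d"
  shows "((\<lambda>g. - ln (P g) / ln g) \<longlongrightarrow> d) at_top"
proof (rule tendsto_sandwich[where f="\<lambda>g. d - ln U / ln g" and h="\<lambda>g. d - ln L / ln g"])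
  have "((\<lambda>g::real. d - ln C / ln g) \<longlongrightarrow> d - 0) at_top" for C :: real
    by (intro tendsto_diff tendsto_const tendsto_divide_0[OF tendsto_const]
        filterlim_at_top_imp_at_infinity[OF ln_at_top])
  then show "((\<lambda>g. d - ln U / ln g) \<longlongrightarrow> d) at_top" "((\<lambda>g. d - ln L / ln g) \<longlongrightarrow> d) at_top"
    by simp_all
  have "d - ln U / ln g \<le> - ln (P g) / ln g \<and> - ln (P g) / ln g \<le> d - ln L / ln g"
    if g: "1 < g" and "L / g powr d \<le> P g" "P g \<le> U / g powr d" for g
  proof -
    have "L \<le> P g * g powr d" "P g * g powr d \<le> U"
      using that by (simp_all add: field_simps)
    moreover have "0 < P g * g powr d"
      using \<open>0 < L\<close> \<open>L \<le> P g * g powr d\<close> by linarith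
    ultimately have "ln L \<le> ln (P g * g powr d)" "ln (P g * g powr d) \<le> ln U"
      using \<open>0 < L\<close> by simp_all
    moreover have "- ln (P g) / ln g = d - ln (P g * g powr d) / ln g"
      using g \<open>0 < P g * g powr d\<close> by (simp add: ln_mult ln_powr zero_less_mult_iff field_simps)
    ultimately show ?thesis
      using g by (simp add: divide_right_mono)
  qed
  then show "\<forall>\<^sub>F g in at_top. d - ln U / ln g \<le> - ln (P g) / ln g"
    and "\<forall>\<^sub>F g in at_top. - ln (P g) / ln g \<le> d - ln L / ln g"
    using eventually_conj[OF eventually_gt_at_top[of 1] bounds] by (auto elim!: eventually_mono)
qed

lemma P_out_IR_between_powers:
  fixes M :: nat and R :: real
  defines "\<alpha> \<equiv> 2 powr (R / (M + 1)) - 1" and "\<beta> \<equiv> 2 powr R - 1"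
  assumes "0 < R" "0 \<le> c" "0 \<le> C"
    and jpdf_bounds: "\<And>x. x \<in> corner_cube M \<epsilon> \<Longrightarrow>
       c * (\<Prod>k<M. x k) \<le> jpdf M \<sigma> lam x \<and> jpdf M \<sigma> lam x \<le> C * (\<Prod>k<M. x k)"
    and "0 \<le> \<epsilon>" "0 < \<gamma>" "\<beta> / \<gamma> \<le> \<epsilon>^2"
  shows "c * (\<alpha> / 2)^M / \<gamma> powr M \<le> P_out_IR M \<sigma> lam R \<gamma>
    \<and> P_out_IR M \<sigma> lam R \<gamma> \<le> C * (\<beta> / 2)^M / \<gamma> powr M"
proof -
  have "0 < \<alpha>" "0 < \<beta>"
    using \<open>0 < R\<close> by (simp_all add: \<alpha>_def \<beta>_def)
  have "sqrt (\<beta> / \<gamma>) \<le> \<epsilon>"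
    using real_sqrt_le_mono[OF \<open>\<beta> / \<gamma> \<le> \<epsilon>^2\<close>] \<open>0 \<le> \<epsilon>\<close> by simp
  then have "x \<in> corner_cube M \<epsilon>" if "x \<in> outage_set M R \<gamma>" for x
    using outage_set_subset_corner_cube[OF \<open>0 < \<gamma>\<close>, of M R] that
    by (fastforce simp: corner_cube_def \<beta>_def)
  then have "c * (sqrt (\<alpha> / \<gamma>)^2 / 2)^M \<le> P_out_IR M \<sigma> lam R \<gamma>
      \<and> P_out_IR M \<sigma> lam R \<gamma> \<le> C * (sqrt (\<beta> / \<gamma>)^2 / 2)^M"
    unfolding P_out_IR_def
    using corner_cube_subset_outage_set[OF \<open>0 < \<gamma>\<close> \<open>0 < R\<close>, of M, folded \<alpha>_def]
      outage_set_subset_corner_cube[OF \<open>0 < \<gamma>\<close>, of M R, folded \<beta>_def]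
      \<open>0 < \<gamma>\<close> \<open>0 < \<alpha>\<close> \<open>0 < \<beta>\<close> \<open>0 \<le> c\<close> \<open>0 \<le> C\<close> jpdf_bounds
    by (intro set_integral_between_corner_cubes borel_measurable_jpdf pred_outage_set) auto
  then show ?thesis
    using \<open>0 < \<gamma>\<close> \<open>0 < \<alpha>\<close> \<open>0 < \<beta>\<close> by (simp add: powr_realpow power_divide mult.commute)
qed

theorem mainTheorem12:
  fixes M :: nat and \<sigma> lam :: "nat \<Rightarrow> real" and R :: real
  assumes "M \<ge> 1"
    and "\<And>k. k < M \<Longrightarrow> \<sigma> k > 0"
    and "\<And>k. k < M \<Longrightarrow> \<bar>lam k\<bar> < 1"
    and "R > 0"
  shows "((\<lambda>\<gamma>T. - ln (P_out_IR M \<sigma> lam R \<gamma>T) / ln \<gamma>T) \<longlongrightarrow> real M) at_top"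
proof -
  have "\<sigma> k \<noteq> 0" if "k < M" for k
    using assms(2)[OF that] by simp
  then obtain \<epsilon> c C where "0 < \<epsilon>" "0 < c" "0 < C" and jpdf_bounds:
    "\<And>x. x \<in> corner_cube M \<epsilon> \<Longrightarrow>
       c * (\<Prod>k<M. x k) \<le> jpdf M \<sigma> lam x \<and> jpdf M \<sigma> lam x \<le> C * (\<Prod>k<M. x k)"
    using jpdf_bounded_by_prod_near_origin assms(3) by blast
  have "\<forall>\<^sub>F \<gamma> in at_top. 0 < \<gamma> \<and> (2 powr R - 1) / \<gamma> \<le> \<epsilon>^2"
    using eventually_ge_at_top[of "max 1 ((2 powr R - 1) / \<epsilon>^2)"]
    by eventually_elim (use \<open>0 < \<epsilon>\<close> in \<open>auto simp: field_simps\<close>)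
  then have "\<forall>\<^sub>F \<gamma> in at_top. c * ((2 powr (R / (M + 1)) - 1) / 2)^M / \<gamma> powr M \<le> P_out_IR M \<sigma> lam R \<gamma>
      \<and> P_out_IR M \<sigma> lam R \<gamma> \<le> C * ((2 powr R - 1) / 2)^M / \<gamma> powr M"
    using \<open>R > 0\<close> \<open>0 < \<epsilon>\<close> \<open>0 < c\<close> \<open>0 < C\<close> jpdf_bounds
    by (elim eventually_mono) (intro P_out_IR_between_powers; auto)
  then show ?thesis
    using \<open>0 < c\<close> \<open>R > 0\<close> by (intro neg_ln_div_ln_tendsto_of_power_bounds) auto
qed

end
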